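(* Suppose $\|\widehat\theta_t-\theta^*\|_{\Sigma_t}\le\beta_t$ for all $t\in[T]$ (with $\|\theta^*\|_2\le L_\theta$). Then for each episode $k$ of \texttt{UCMNLK} and all $(s,a)\in\mathcal S\times\mathcal A$: $1/(1-\gamma)\ge V_k(s)\ge V^*(s)$ and $1/(1-\gamma)\ge Q_k(s,a)\ge Q^*(s,a)$.
   Context: Setting as for \texttt{UCMNLK}: finite $\mathcal S,\mathcal A$, reward $r\in[0,1]$, true transitions $p(s'\mid s,a,\theta^* )$ of MNL form $p(s'\mid s,a,\theta)=\exp(\varphi(s,a,s')^\top\theta)/\sum_{s''\in\mathcal S_{s,a}}\exp(\varphi(s,a,s'')^\top\theta)$ on known reachable sets $\mathcal S_{s,a}$. $\widehat\theta_t,\Sigma_t$ are the online estimator's iterates; $\mathcal P_t$ is the set of $p\in[0,1]^{\mathcal S\times\mathcal A\times\mathcal S}$ with $\sum_{s'\in\mathcal S_{s,a}}p_{s,a,s'}=1$ and $\sum_{s'\in\mathcal S_{s,a}}|p_{s,a,s'}-p(s'\mid s,a,\widehat\theta_t)|\le\beta_t\sum_{s'}p(s'\mid s,a,\widehat\theta_t)\|\varphi(s,a,s')-\sum_{s''}p(s''\mid s,a,\widehat\theta_t)\varphi(s,a,s'')\|_{\Sigma_t^{-1}}+3\beta_t^2\max_{s'}\|\varphi(s,a,s')\|^2_{\Sigma_t^{-1}}$ for all $(s,a)$. For episode $k$ starting at $t_k$, $Q_k$ is the output of \texttt{DEVI}$(\gamma,\mathcal P_{t_k},N)$: $Q^{(0)}\equiv1/(1-\gamma)$,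 $V^{(n-1)}(s)=\max_aQ^{(n-1)}(s,a)$, $Q^{(n)}(s,a)=r(s,a)+\gamma\max_{p\in\mathcal P_{t_k}}\sum_{s'\in\mathcal S_{s,a}}p_{s,a,s'}V^{(n-1)}(s')$, $Q_k=Q^{(N)}$; $V_k(s)=\max_aQ_k(s,a)$. $V^*,Q^*$ are the optimal value and action-value functions of the discounted MDP with discount $\gamma$ under the true transitions, satisfying $Q^*(s,a)=r(s,a)+\gamma\sum_{s'}p(s'\mid s,a,\theta^* )V^*(s')$, $V^*(s)=\max_aQ^*(s,a)$. *)

theory Defs
  imports "HOL-Analysis.Analysis"
begin

definition wnorm :: "real^'d^'d \<Rightarrow> real^'d \<Rightarrow> real" where
  "wnorm M x = sqrt (x \<bullet> (M *v x))"

definition pos_def_mat :: "real^'d^'d \<Rightarrow> bool" where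
  "pos_def_mat M \<longleftrightarrow> transpose M = M \<and> (\<forall>x. x \<noteq> 0 \<longrightarrow> x \<bullet> (M *v x) > 0)"

definition mnl_prob ::
  "('s \<Rightarrow> 'a \<Rightarrow> 's \<Rightarrow> real^'d) \<Rightarrow> ('s \<Rightarrow> 'a \<Rightarrow> 's set) \<Rightarrow> real^'d \<Rightarrow> 's \<Rightarrow> 'a \<Rightarrow> 's \<Rightarrow> real" where
  "mnl_prob \<phi> Sr \<theta> s a s' =
     (if s' \<in> Sr s a
      then exp (\<phi> s a s' \<bullet> \<theta>) / (\<Sum>s''\<in>Sr s a. exp (\<phi> s a s'' \<bullet> \<theta>))
      else 0)"

definition conf_set ::
  "('s \<Rightarrow> 'a \<Rightarrow> 's \<Rightarrow> real^'d) \<Rightarrow> ('s \<Rightarrow> 'a \<Rightarrow> 's set) \<Rightarrow> real \<Rightarrow> real^'d^'d \<Rightarrow> real^'d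
     \<Rightarrow> ('s \<Rightarrow> 'a \<Rightarrow> 's \<Rightarrow> real) set" where
  "conf_set \<phi> Sr \<beta> \<Sigma> \<theta>h =
    {p. (\<forall>s a s'. 0 \<le> p s a s' \<and> p s a s' \<le> 1) \<and>
        (\<forall>s a. (\<Sum>s'\<in>Sr s a. p s a s') = 1 \<and>
           (\<Sum>s'\<in>Sr s a. \<bar>p s a s' - mnl_prob \<phi> Sr \<theta>h s a s'\<bar>)
             \<le> \<beta> * (\<Sum>s'\<in>Sr s a. mnl_prob \<phi> Sr \<theta>h s a s' *
                    wnorm (matrix_inv \<Sigma>)
                      (\<phi> s a s' - (\<Sum>s''\<in>Sr s a. mnl_prob \<phi> Sr \<theta>h s a s'' *\<^sub>R \<phi> s a s'')))
               + 3 * \<beta>\<^sup>2 * Max ((\<lambda>s'. (wnorm (matrix_inv \<Sigma>) (\<phi> s a s'))\<^sup>2) ` Sr s a))}"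

fun devi_Q ::
  "('s::finite \<Rightarrow> 'a::finite \<Rightarrow> real) \<Rightarrow> ('s \<Rightarrow> 'a \<Rightarrow> 's set) \<Rightarrow> real
     \<Rightarrow> ('s \<Rightarrow> 'a \<Rightarrow> 's \<Rightarrow> real) set \<Rightarrow> nat \<Rightarrow> 's \<Rightarrow> 'a \<Rightarrow> real" where
  "devi_Q r Sr \<gamma> P 0 = (\<lambda>s a. 1 / (1 - \<gamma>))"
| "devi_Q r Sr \<gamma> P (Suc n) = (\<lambda>s a. r s a + \<gamma> *
      Sup ((\<lambda>p. \<Sum>s'\<in>Sr s a. p s a s' * Max (range (devi_Q r Sr \<gamma> P n s'))) ` P))"

definition devi_V ::
  "('s::finite \<Rightarrow> 'a::finite \<Rightarrow> real) \<Rightarrow> ('s \<Rightarrow> 'a \<Rightarrow> 's set) \<Rightarrow> real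
     \<Rightarrow> ('s \<Rightarrow> 'a \<Rightarrow> 's \<Rightarrow> real) set \<Rightarrow> nat \<Rightarrow> 's \<Rightarrow> real" where
  "devi_V r Sr \<gamma> P N s = Max (range (devi_Q r Sr \<gamma> P N s))"

end

theory Submission
  imports Defs
begin

text \<open>
  First, the true kernel lies in the confidence set. MNL probabilities are
  the softmax of the logits \<open>\<phi>(s,a,s') \<bullet> \<theta>\<close>. Shifting the logits by \<open>x\<close> with \<open>\<bar>x i\<bar> \<le> m\<close>
  reweights the softmax \<open>p\<close> by \<open>exp (x - xbar)\<close>, where \<open>xbar\<close> is the \<open>p\<close>-mean of \<open>x\<close>, and a
  second-order expansion of the exponential bounds the resulting \<open>\<ell>\<^sub>1\<close>-change by
  \<open>\<Sum>i. p i * \<bar>x i - xbar\<bar> + 3 m\<^sup>2\<close>. For \<open>x i = \<phi> i \<bullet> (\<theta>\<^sup>* - \<theta>h)\<close>, Cauchy-Schwarz in the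
  \<open>\<Sigma>\<close>-norm bounds \<open>\<bar>x i - xbar\<bar>\<close> by \<open>\<beta>\<close> times the \<open>\<Sigma>\<^sup>-\<^sup>1\<close>-norm of \<open>\<phi> i - \<phi>bar\<close>, and \<open>m\<close> by \<open>\<beta>\<close>
  times the largest \<open>\<Sigma>\<^sup>-\<^sup>1\<close>-norm of a feature: this is exactly the radius of the confidence set.

  Second, DEVI is value iteration that maximises over the confidence set, started from the
  upper bound \<open>1 / (1 - \<gamma>) \<ge> V\<^sup>*\<close>. As the set contains the true kernel, comparison with the
  Bellman equation of \<open>Q\<^sup>*\<close> shows by induction that every iterate dominates \<open>Q\<^sup>*\<close>; as rewards
  are at most 1 and the set consists of probability kernels, every iterate stays below
  \<open>1 / (1 - \<gamma>)\<close>.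
\<close>

section \<open>Second-order bounds for exponential reweighting\<close>

lemma exp_le_one_plus_x_plus_sq:
  fixes x :: real
  assumes "\<bar>x\<bar> \<le> 1"
  shows "exp x \<le> 1 + x + x\<^sup>2"
proof (cases "0 \<le> x")
  case True
  then show ?thesis using exp_bound assms by simp
next
  case False
  define u where "u = - x"
  have u: "0 < u" "u \<le> 1" using False assms by (auto simp: u_def)
  have pos: "0 < 1 + u + u\<^sup>2 / 2" using u by (simp add: add_pos_nonneg)
  have "exp x = 1 / exp u" by (simp add: u_def exp_minus divide_inverse)
  also have "\<dots> \<le> 1 / (1 + u + u\<^sup>2 / 2)"
    using exp_lower_Taylor_quadratic[of u] u pos by (simp add: frac_le)
  also have "\<dots> \<le> 1 - u + u\<^sup>2"
  proof -
    have "1 \<le> 1 + u\<^sup>2 / 2 + u ^ 3 / 2 + u ^ 4 / 2" using u by simp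
    also have "\<dots> = (1 - u + u\<^sup>2) * (1 + u + u\<^sup>2 / 2)"
      by (simp add: power2_eq_square power3_eq_cube power4_eq_xxxx field_simps)
    finally show ?thesis using pos by (simp add: divide_le_eq)
  qed
  finally show ?thesis by (simp add: u_def)
qed

text \<open>Since \<open>x \<mapsto> 2 (x - 1) / x\<close> is increasing, this bounds \<open>2 (Z - 1) / Z\<close> whenever
  \<open>1 \<le> Z \<le> 1 + exp m * m\<^sup>2\<close>.\<close>

lemma two_exp_sq_div_le:
  fixes m :: real
  assumes "0 \<le> m"
  shows "2 * (exp m * m\<^sup>2) / (1 + exp m * m\<^sup>2) \<le> 3 * m\<^sup>2"
proof -
  define A where "A = exp m * m\<^sup>2"
  have A: "0 \<le> A" by (simp add: A_def)
  have "exp m * (2 - 3 * m\<^sup>2) \<le> 3"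
  proof (cases "3 * m\<^sup>2 \<le> 2")
    case True
    then have "m\<^sup>2 \<le> 1\<^sup>2" by simp
    then have "m \<le> 1" by (rule power2_le_imp_le) simp
    have "exp m * (2 - 3 * m\<^sup>2) \<le> (1 + m + m\<^sup>2) * (2 - 3 * m\<^sup>2)"
      using exp_bound[OF assms \<open>m \<le> 1\<close>] True by (simp add: mult_right_mono)
    also have "\<dots> = 3 - ((1 - m)\<^sup>2 + 3 * m ^ 3 + 3 * m ^ 4)"
      by (simp add: power2_eq_square power3_eq_cube power4_eq_xxxx field_simps)
    also have "\<dots> \<le> 3"
    proof -
      have "0 \<le> (1 - m)\<^sup>2 + 3 * m ^ 3 + 3 * m ^ 4"
        using assms by (intro add_nonneg_nonneg) simp_all
      then show ?thesis by linarith
    qed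
    finally show ?thesis .
  next
    case False
    then have "exp m * (2 - 3 * m\<^sup>2) \<le> 0" by (intro mult_nonneg_nonpos) simp_all
    then show ?thesis by simp
  qed
  then have "0 \<le> m\<^sup>2 * (3 - exp m * (2 - 3 * m\<^sup>2))" by simp
  then have "2 * A \<le> 3 * m\<^sup>2 * (1 + A)" by (simp add: A_def algebra_simps)
  then show ?thesis using A by (simp flip: A_def add: divide_le_eq)
qed

lemma one_le_sum_mult_exp:
  fixes P y :: "'i \<Rightarrow> real"
  assumes P: "\<And>i. i \<in> S \<Longrightarrow> 0 \<le> P i" "(\<Sum>i\<in>S. P i) = 1"
    and centered: "(\<Sum>i\<in>S. P i * y i) = 0"
  shows "1 \<le> (\<Sum>i\<in>S. P i * exp (y i))"
proof -
  have "(\<Sum>i\<in>S. P i * (1 + y i)) \<le> (\<Sum>i\<in>S. P i * exp (y i))"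
    using P(1) by (intro sum_mono mult_left_mono) simp_all
  moreover have "(\<Sum>i\<in>S. P i * (1 + y i)) = 1"
    using P(2) centered by (simp add: distrib_left sum.distrib)
  ultimately show ?thesis by simp
qed

lemma sum_mult_abs_exp_diff_le:
  fixes P y :: "'i \<Rightarrow> real"
  assumes P: "\<And>i. i \<in> S \<Longrightarrow> 0 \<le> P i" "(\<Sum>i\<in>S. P i) = 1"
    and centered: "(\<Sum>i\<in>S. P i * y i) = 0"
  defines "Z \<equiv> \<Sum>i\<in>S. P i * exp (y i)"
  shows "(\<Sum>i\<in>S. P i * \<bar>exp (y i) - Z\<bar>) \<le> (\<Sum>i\<in>S. P i * \<bar>y i\<bar>) + 2 * (Z - 1)"
proof -
  have Z: "1 \<le> Z" unfolding Z_def using one_le_sum_mult_exp[OF P centered] .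
  have "\<bar>exp (y i) - Z\<bar> \<le> \<bar>y i\<bar> + (exp (y i) - 1 - y i) + (Z - 1)" for i
    using exp_ge_add_one_self[of "y i"] Z by linarith
  then have "(\<Sum>i\<in>S. P i * \<bar>exp (y i) - Z\<bar>)
      \<le> (\<Sum>i\<in>S. P i * (\<bar>y i\<bar> + (exp (y i) - 1 - y i) + (Z - 1)))"
    using P(1) by (intro sum_mono mult_left_mono) simp_all
  also have "\<dots> = (\<Sum>i\<in>S. P i * \<bar>y i\<bar>) + (Z - (\<Sum>i\<in>S. P i) - (\<Sum>i\<in>S. P i * y i))
      + (\<Sum>i\<in>S. P i) * (Z - 1)"
    by (simp add: Z_def algebra_simps sum.distrib sum_subtractf sum_distrib_right)
  also have "\<dots> = (\<Sum>i\<in>S. P i * \<bar>y i\<bar>) + 2 * (Z - 1)"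
    using P(2) centered by simp
  finally show ?thesis .
qed

lemma sum_mult_exp_centered_le:
  fixes P x :: "'i \<Rightarrow> real"
  assumes P: "\<And>i. i \<in> S \<Longrightarrow> 0 \<le> P i" "(\<Sum>i\<in>S. P i) = 1"
    and x: "\<And>i. i \<in> S \<Longrightarrow> \<bar>x i\<bar> \<le> m" and "m \<le> 1"
  defines "xbar \<equiv> \<Sum>i\<in>S. P i * x i"
  shows "(\<Sum>i\<in>S. P i * exp (x i - xbar)) \<le> 1 + exp m * m\<^sup>2"
proof -
  have "\<bar>xbar\<bar> \<le> (\<Sum>i\<in>S. \<bar>P i * x i\<bar>)"
    unfolding xbar_def by (rule sum_abs)
  also have "\<dots> = (\<Sum>i\<in>S. P i * \<bar>x i\<bar>)"
    using P(1) by (intro sum.cong) (simp_all add: abs_mult)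
  also have "\<dots> \<le> (\<Sum>i\<in>S. P i * m)"
    using P(1) x by (intro sum_mono mult_left_mono) simp_all
  finally have xbar: "\<bar>xbar\<bar> \<le> m" using P(2) by (simp flip: sum_distrib_right)
  have "exp (x i) \<le> 1 + x i + m\<^sup>2" if "i \<in> S" for i
  proof -
    have "\<bar>x i\<bar> \<le> 1" using x[OF that] \<open>m \<le> 1\<close> by simp
    moreover have "(x i)\<^sup>2 \<le> m\<^sup>2" using x[OF that] power_mono[of "\<bar>x i\<bar>" m 2] by simp
    ultimately show ?thesis using exp_le_one_plus_x_plus_sq[of "x i"] by linarith
  qed
  then have "(\<Sum>i\<in>S. P i * exp (x i)) \<le> (\<Sum>i\<in>S. P i * (1 + x i + m\<^sup>2))"
    using P(1) by (intro sum_mono mult_left_mono) simp_all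
  also have "\<dots> = 1 + xbar + m\<^sup>2"
    using P(2) by (simp add: xbar_def algebra_simps sum.distrib flip: sum_distrib_right)
  finally have "exp (- xbar) * (\<Sum>i\<in>S. P i * exp (x i)) \<le> exp (- xbar) * (1 + xbar + m\<^sup>2)"
    by (intro mult_left_mono) simp_all
  moreover have "exp (x i - xbar) = exp (- xbar) * exp (x i)" for i
    by (simp flip: exp_add)
  ultimately have "(\<Sum>i\<in>S. P i * exp (x i - xbar))
      \<le> exp (- xbar) * (1 + xbar) + exp (- xbar) * m\<^sup>2"
    by (simp add: sum_distrib_left algebra_simps)
  also have "exp (- xbar) * (1 + xbar) \<le> exp (- xbar) * exp xbar"
    by (intro mult_left_mono) simp_all
  also have "exp (- xbar) * m\<^sup>2 \<le> exp m * m\<^sup>2"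
    using xbar by (intro mult_right_mono) simp_all
  finally show ?thesis by (simp flip: exp_add)
qed

lemma sum_abs_reweight_diff_le:
  fixes P y :: "'i \<Rightarrow> real"
  assumes P: "\<And>i. i \<in> S \<Longrightarrow> 0 \<le> P i" "(\<Sum>i\<in>S. P i) = 1"
    and centered: "(\<Sum>i\<in>S. P i * y i) = 0"
  defines "Z \<equiv> \<Sum>i\<in>S. P i * exp (y i)"
  shows "(\<Sum>i\<in>S. \<bar>P i * exp (y i) / Z - P i\<bar>) \<le> (\<Sum>i\<in>S. P i * \<bar>y i\<bar>) + 2 * (Z - 1) / Z"
proof -
  have Z: "1 \<le> Z" unfolding Z_def by (rule one_le_sum_mult_exp[OF P centered])
  have "\<bar>P i * exp (y i) / Z - P i\<bar> = P i * \<bar>exp (y i) - Z\<bar> / Z" if "i \<in> S" for i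
  proof -
    have "P i * exp (y i) / Z - P i = P i * (exp (y i) - Z) / Z" using Z by (simp add: field_simps)
    then show ?thesis using P(1)[OF that] Z by (simp add: abs_mult)
  qed
  then have "(\<Sum>i\<in>S. \<bar>P i * exp (y i) / Z - P i\<bar>) = (\<Sum>i\<in>S. P i * \<bar>exp (y i) - Z\<bar>) / Z"
    by (simp add: sum_divide_distrib)
  also have "\<dots> \<le> ((\<Sum>i\<in>S. P i * \<bar>y i\<bar>) + 2 * (Z - 1)) / Z"
    using sum_mult_abs_exp_diff_le[OF P centered] Z by (simp add: Z_def divide_right_mono)
  also have "\<dots> \<le> (\<Sum>i\<in>S. P i * \<bar>y i\<bar>) + 2 * (Z - 1) / Z"
  proof -
    have "0 \<le> (\<Sum>i\<in>S. P i * \<bar>y i\<bar>)" using P(1) by (simp add: sum_nonneg)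
    then have "(\<Sum>i\<in>S. P i * \<bar>y i\<bar>) / Z \<le> (\<Sum>i\<in>S. P i * \<bar>y i\<bar>)"
      using Z by (simp add: divide_le_eq mult_le_cancel_left1)
    then show ?thesis by (simp add: add_divide_distrib)
  qed
  finally show ?thesis .
qed

lemma reweighted_l1_dist_le:
  fixes P x :: "'i \<Rightarrow> real"
  assumes P: "\<And>i. i \<in> S \<Longrightarrow> 0 \<le> P i" "(\<Sum>i\<in>S. P i) = 1"
    and x: "\<And>i. i \<in> S \<Longrightarrow> \<bar>x i\<bar> \<le> m"
  defines "y \<equiv> \<lambda>i. x i - (\<Sum>j\<in>S. P j * x j)"
  shows "(\<Sum>i\<in>S. \<bar>P i * exp (y i) / (\<Sum>j\<in>S. P j * exp (y j)) - P i\<bar>)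
    \<le> (\<Sum>i\<in>S. P i * \<bar>y i\<bar>) + 3 * m\<^sup>2"
proof -
  define Z where "Z = (\<Sum>j\<in>S. P j * exp (y j))"
  have centered: "(\<Sum>i\<in>S. P i * y i) = 0"
    using P(2) by (simp add: y_def right_diff_distrib sum_subtractf flip: sum_distrib_right)
  have Z: "1 \<le> Z" unfolding Z_def by (rule one_le_sum_mult_exp[OF P centered])
  obtain i where "i \<in> S" using P(2) by fastforce
  then have m: "0 \<le> m" using x[of i] by linarith
  have "2 * (Z - 1) / Z \<le> 3 * m\<^sup>2"
  proof (cases "m \<le> 1")
    case True
    have ZA: "Z \<le> 1 + exp m * m\<^sup>2"
      unfolding Z_def y_def using sum_mult_exp_centered_le[OF P x True] by simp
    have "0 < 1 + exp m * m\<^sup>2" by (simp add: add_pos_nonneg)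
    then have "2 * (Z - 1) / Z \<le> 2 * (exp m * m\<^sup>2) / (1 + exp m * m\<^sup>2)"
      using Z ZA by (simp add: field_simps)
    also have "\<dots> \<le> 3 * m\<^sup>2" by (rule two_exp_sq_div_le[OF m])
    finally show ?thesis .
  next
    case False
    then have "1 \<le> m\<^sup>2" by (simp add: one_le_power)
    moreover have "2 * (Z - 1) / Z \<le> 2" using Z by (simp add: divide_le_eq)
    ultimately show ?thesis by linarith
  qed
  then show ?thesis
    using sum_abs_reweight_diff_le[OF P centered] by (simp add: Z_def)
qed

definition softmax :: "'i set \<Rightarrow> ('i \<Rightarrow> real) \<Rightarrow> 'i \<Rightarrow> real" where
  "softmax S u i = exp (u i) / (\<Sum>j\<in>S. exp (u j))"

lemma softmax_nonneg: "0 \<le> softmax S u i"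
  unfolding softmax_def by (simp add: sum_nonneg)

lemma softmax_le_one:
  assumes "finite S" "i \<in> S"
  shows "softmax S u i \<le> 1"
proof -
  have "exp (u i) \<le> (\<Sum>j\<in>S. exp (u j))" using assms by (intro member_le_sum) simp_all
  moreover have "0 < (\<Sum>j\<in>S. exp (u j))" using assms by (intro sum_pos) auto
  ultimately show ?thesis unfolding softmax_def by simp
qed

lemma sum_softmax:
  assumes "finite S" "S \<noteq> {}"
  shows "(\<Sum>i\<in>S. softmax S u i) = 1"
proof -
  have "0 < (\<Sum>j\<in>S. exp (u j))" using assms by (simp add: sum_pos)
  then show ?thesis unfolding softmax_def by (simp flip: sum_divide_distrib)
qed

lemma softmax_reweight:
  assumes "finite S" "S \<noteq> {}"
  shows "softmax S v i
    = softmax S u i * exp (v i - u i - c) / (\<Sum>j\<in>S. softmax S u j * exp (v j - u j - c))"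
proof -
  define k where "k = exp (- c) / (\<Sum>j\<in>S. exp (u j))"
  have "0 < (\<Sum>j\<in>S. exp (u j))" using assms by (simp add: sum_pos)
  then have k: "0 < k" by (simp add: k_def)
  have "softmax S u j * exp (v j - u j - c) = exp (v j) * k" for j
  proof -
    have "exp (v j - u j - c) * exp (u j) = exp (v j) * exp (- c)" by (simp flip: exp_add)
    then show ?thesis unfolding softmax_def k_def by (simp add: mult.commute)
  qed
  then show ?thesis
    using k by (simp add: softmax_def flip: sum_distrib_right)
qed

lemma softmax_l1_dist_le:
  assumes "finite S" "S \<noteq> {}" "\<And>i. i \<in> S \<Longrightarrow> \<bar>v i - u i\<bar> \<le> m"
  shows "(\<Sum>i\<in>S. \<bar>softmax S v i - softmax S u i\<bar>)
    \<le> (\<Sum>i\<in>S. softmax S u i *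
          \<bar>(v i - u i) - (\<Sum>j\<in>S. softmax S u j * (v j - u j))\<bar>) + 3 * m\<^sup>2"
  using reweighted_l1_dist_le[of S "softmax S u" "\<lambda>i. v i - u i" m]
    softmax_reweight[OF assms(1,2), where c = "\<Sum>j\<in>S. softmax S u j * (v j - u j)"]
  by (simp add: assms softmax_nonneg sum_softmax)

section \<open>Positive definite matrices and weighted norms\<close>

lemma pos_def_mat_quadratic_nonneg: "pos_def_mat S \<Longrightarrow> 0 \<le> x \<bullet> (S *v x)"
  unfolding pos_def_mat_def by (cases "x = 0") (auto intro: less_imp_le)

lemma pos_def_mat_inner_commute:
  assumes "pos_def_mat S"
  shows "w \<bullet> (S *v v) = v \<bullet> (S *v w)"
proof -
  have "v \<bullet> (S *v w) = (transpose S *v v) \<bullet> w" by (simp add: dot_lmul_matrix)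
  also have "\<dots> = w \<bullet> (S *v v)" using assms by (simp add: pos_def_mat_def inner_commute)
  finally show ?thesis ..
qed

lemma pos_def_mat_Cauchy_Schwarz:
  assumes S: "pos_def_mat S"
  shows "(w \<bullet> (S *v v))\<^sup>2 \<le> (w \<bullet> (S *v w)) * (v \<bullet> (S *v v))"
proof (cases "v = 0")
  case True
  then show ?thesis by simp
next
  case False
  define c where "c = w \<bullet> (S *v v)"
  define B where "B = v \<bullet> (S *v v)"
  have B: "0 < B" using S False by (simp add: pos_def_mat_def B_def)
  have "0 \<le> (w - (c / B) *\<^sub>R v) \<bullet> (S *v (w - (c / B) *\<^sub>R v))"
    by (rule pos_def_mat_quadratic_nonneg[OF S])
  also have "\<dots> = w \<bullet> (S *v w) - c\<^sup>2 / B"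
    using pos_def_mat_inner_commute[OF S, of v w] B
    by (simp add: c_def B_def matrix_vector_mult_diff_distrib matrix_vector_mult_scaleR
        inner_diff_left inner_diff_right power2_eq_square field_simps)
  finally show ?thesis using B by (simp add: c_def B_def divide_le_eq)
qed

lemma matrix_mul_matrix_inv:
  fixes A :: "'a::semiring_1^'n^'n"
  assumes "invertible A"
  shows "A ** matrix_inv A = mat 1"
proof -
  have "\<exists>A'. A ** A' = mat 1 \<and> A' ** A = mat 1" using assms by (simp add: invertible_def)
  then have "A ** matrix_inv A = mat 1 \<and> matrix_inv A ** A = mat 1"
    unfolding matrix_inv_def by (rule someI_ex)
  then show ?thesis ..
qed

lemma pos_def_mat_invertible:
  fixes S :: "real^'n^'n"
  assumes "pos_def_mat S"
  shows "invertible S"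
proof -
  have "\<forall>x. S *v x = 0 \<longrightarrow> x = 0"
    using assms unfolding pos_def_mat_def by (metis inner_zero_right less_irrefl)
  then show ?thesis by (metis matrix_left_invertible_ker invertible_left_inverse)
qed

lemma pos_def_mat_mult_matrix_inv:
  fixes S :: "real^'n^'n"
  assumes "pos_def_mat S"
  shows "S *v (matrix_inv S *v u) = u"
  using matrix_mul_matrix_inv[OF pos_def_mat_invertible[OF assms]]
  by (simp add: matrix_vector_mul_assoc)

lemma wnorm_nonneg: "pos_def_mat S \<Longrightarrow> 0 \<le> wnorm S v"
  unfolding wnorm_def by (simp add: pos_def_mat_quadratic_nonneg)

lemma wnorm_matrix_inv_nonneg:
  fixes S :: "real^'n^'n"
  assumes S: "pos_def_mat S"
  shows "0 \<le> wnorm (matrix_inv S) u"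
proof -
  define w where "w = matrix_inv S *v u"
  have "u \<bullet> (matrix_inv S *v u) = w \<bullet> (S *v w)"
    using pos_def_mat_mult_matrix_inv[OF S, of u] by (simp add: w_def inner_commute)
  then show ?thesis unfolding wnorm_def by (simp add: pos_def_mat_quadratic_nonneg[OF S])
qed

lemma abs_inner_le_wnorm:
  fixes S :: "real^'n^'n"
  assumes S: "pos_def_mat S"
  shows "\<bar>u \<bullet> v\<bar> \<le> wnorm (matrix_inv S) u * wnorm S v"
proof -
  define w where "w = matrix_inv S *v u"
  have Sw: "S *v w = u" unfolding w_def by (rule pos_def_mat_mult_matrix_inv[OF S])
  have "u \<bullet> v = w \<bullet> (S *v v)"
    using pos_def_mat_inner_commute[OF S, of w v] Sw by (simp add: inner_commute)
  moreover have "u \<bullet> (matrix_inv S *v u) = w \<bullet> (S *v w)"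
    using Sw by (simp add: w_def inner_commute)
  ultimately have "(u \<bullet> v)\<^sup>2 \<le> (u \<bullet> (matrix_inv S *v u)) * (v \<bullet> (S *v v))"
    using pos_def_mat_Cauchy_Schwarz[OF S] by simp
  then have "sqrt ((u \<bullet> v)\<^sup>2) \<le> sqrt ((u \<bullet> (matrix_inv S *v u)) * (v \<bullet> (S *v v)))"
    by (rule real_sqrt_le_mono)
  then show ?thesis unfolding wnorm_def by (simp add: real_sqrt_mult)
qed

lemma abs_inner_le_of_wnorm_le:
  fixes S :: "real^'n^'n"
  assumes S: "pos_def_mat S" and v: "wnorm S v \<le> \<beta>"
  shows "\<bar>u \<bullet> v\<bar> \<le> \<beta> * wnorm (matrix_inv S) u"
proof -
  have "\<bar>u \<bullet> v\<bar> \<le> wnorm (matrix_inv S) u * wnorm S v" by (rule abs_inner_le_wnorm[OF S])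
  also have "\<dots> \<le> wnorm (matrix_inv S) u * \<beta>"
    using v by (intro mult_left_mono wnorm_matrix_inv_nonneg[OF S])
  finally show ?thesis by (simp add: mult.commute)
qed

section \<open>MNL kernels lie in their confidence sets\<close>

definition stochastic_kernel :: "('s \<Rightarrow> 'a \<Rightarrow> 's set) \<Rightarrow> ('s \<Rightarrow> 'a \<Rightarrow> 's \<Rightarrow> real) \<Rightarrow> bool" where
  "stochastic_kernel Sr p \<longleftrightarrow> (\<forall>s a s'. 0 \<le> p s a s') \<and> (\<forall>s a. (\<Sum>s'\<in>Sr s a. p s a s') = 1)"

lemma conf_set_stochastic: "p \<in> conf_set \<phi> Sr \<beta> \<Sigma> \<theta>h \<Longrightarrow> stochastic_kernel Sr p"
  unfolding conf_set_def stochastic_kernel_def by blast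

lemma mnl_prob_eq_softmax:
  "s' \<in> Sr s a \<Longrightarrow> mnl_prob \<phi> Sr \<theta> s a s' = softmax (Sr s a) (\<lambda>s'. \<phi> s a s' \<bullet> \<theta>) s'"
  by (simp add: mnl_prob_def softmax_def)

lemma mnl_prob_le_one:
  fixes \<phi> :: "'s::finite \<Rightarrow> 'a \<Rightarrow> 's \<Rightarrow> real^'d"
  shows "mnl_prob \<phi> Sr \<theta> s a s' \<le> 1"
proof (cases "s' \<in> Sr s a")
  case True
  then show ?thesis by (simp add: mnl_prob_eq_softmax softmax_le_one)
qed (simp add: mnl_prob_def)

lemma mnl_prob_stochastic:
  fixes \<phi> :: "'s::finite \<Rightarrow> 'a \<Rightarrow> 's \<Rightarrow> real^'d"
  assumes "\<And>s a. Sr s a \<noteq> {}"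
  shows "stochastic_kernel Sr (mnl_prob \<phi> Sr \<theta>)"
  unfolding stochastic_kernel_def
proof (intro conjI allI)
  fix s a s'
  show "0 \<le> mnl_prob \<phi> Sr \<theta> s a s'" by (simp add: mnl_prob_def sum_nonneg)
  have "(\<Sum>s'\<in>Sr s a. mnl_prob \<phi> Sr \<theta> s a s') = (\<Sum>s'\<in>Sr s a. softmax (Sr s a) (\<lambda>s'. \<phi> s a s' \<bullet> \<theta>) s')"
    by (simp add: mnl_prob_eq_softmax)
  also have "\<dots> = 1" using assms by (simp add: sum_softmax)
  finally show "(\<Sum>s'\<in>Sr s a. mnl_prob \<phi> Sr \<theta> s a s') = 1" .
qed

lemma mnl_prob_l1_dist_le:
  fixes \<phi> :: "'s::finite \<Rightarrow> 'a \<Rightarrow> 's \<Rightarrow> real^'d"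
  assumes ne: "Sr s a \<noteq> {}" and \<Sigma>: "pos_def_mat \<Sigma>" and \<theta>: "wnorm \<Sigma> (\<theta>h - \<theta>s) \<le> \<beta>"
  shows "(\<Sum>s'\<in>Sr s a. \<bar>mnl_prob \<phi> Sr \<theta>s s a s' - mnl_prob \<phi> Sr \<theta>h s a s'\<bar>)
    \<le> \<beta> * (\<Sum>s'\<in>Sr s a. mnl_prob \<phi> Sr \<theta>h s a s' *
          wnorm (matrix_inv \<Sigma>) (\<phi> s a s' - (\<Sum>s''\<in>Sr s a. mnl_prob \<phi> Sr \<theta>h s a s'' *\<^sub>R \<phi> s a s'')))
      + 3 * \<beta>\<^sup>2 * Max ((\<lambda>s'. (wnorm (matrix_inv \<Sigma>) (\<phi> s a s'))\<^sup>2) ` Sr s a)"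
    (is "?lhs \<le> \<beta> * ?first + 3 * \<beta>\<^sup>2 * ?M")
proof -
  define S where "S = Sr s a"
  define u where "u = (\<lambda>i. \<phi> s a i \<bullet> \<theta>h)"
  define v where "v = (\<lambda>i. \<phi> s a i \<bullet> \<theta>s)"
  define fbar where "fbar = (\<Sum>j\<in>S. softmax S u j *\<^sub>R \<phi> s a j)"
  have p: "mnl_prob \<phi> Sr \<theta>h s a i = softmax S u i" "mnl_prob \<phi> Sr \<theta>s s a i = softmax S v i"
    if "i \<in> S" for i
    using that by (simp_all add: S_def u_def v_def mnl_prob_eq_softmax)
  have \<beta>: "0 \<le> \<beta>" using wnorm_nonneg[OF \<Sigma>] \<theta> by (rule order_trans)
  have M: "(wnorm (matrix_inv \<Sigma>) (\<phi> s a i))\<^sup>2 \<le> ?M" if "i \<in> S" for i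
    using that by (intro Max_ge) (simp_all add: S_def)
  have vu: "v i - u i = - (\<phi> s a i \<bullet> (\<theta>h - \<theta>s))" for i
    by (simp add: u_def v_def inner_diff_right)
  have "\<bar>v i - u i\<bar> \<le> \<beta> * sqrt ?M" if "i \<in> S" for i
  proof -
    have "\<bar>v i - u i\<bar> \<le> \<beta> * wnorm (matrix_inv \<Sigma>) (\<phi> s a i)"
      unfolding vu abs_minus_cancel by (rule abs_inner_le_of_wnorm_le[OF \<Sigma> \<theta>])
    also have "wnorm (matrix_inv \<Sigma>) (\<phi> s a i) \<le> sqrt ?M"
      using real_sqrt_le_mono[OF M[OF that]] wnorm_matrix_inv_nonneg[OF \<Sigma>] by simp
    finally show ?thesis using \<beta> by (simp add: mult_left_mono)
  qed
  then have "(\<Sum>i\<in>S. \<bar>softmax S v i - softmax S u i\<bar>)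
      \<le> (\<Sum>i\<in>S. softmax S u i * \<bar>(v i - u i) - (\<Sum>j\<in>S. softmax S u j * (v j - u j))\<bar>)
        + 3 * (\<beta> * sqrt ?M)\<^sup>2"
    using ne by (intro softmax_l1_dist_le) (simp_all add: S_def)
  also have "\<dots> \<le> (\<Sum>i\<in>S. softmax S u i * (\<beta> * wnorm (matrix_inv \<Sigma>) (\<phi> s a i - fbar)))
        + 3 * \<beta>\<^sup>2 * ?M"
  proof -
    have "(v i - u i) - (\<Sum>j\<in>S. softmax S u j * (v j - u j))
        = - ((\<phi> s a i - fbar) \<bullet> (\<theta>h - \<theta>s))" for i
      by (simp add: vu fbar_def inner_diff_left inner_sum_left sum_negf)
    then have "\<bar>(v i - u i) - (\<Sum>j\<in>S. softmax S u j * (v j - u j))\<bar>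
        \<le> \<beta> * wnorm (matrix_inv \<Sigma>) (\<phi> s a i - fbar)" for i
      using abs_inner_le_of_wnorm_le[OF \<Sigma> \<theta>] by simp
    then have "(\<Sum>i\<in>S. softmax S u i * \<bar>(v i - u i) - (\<Sum>j\<in>S. softmax S u j * (v j - u j))\<bar>)
        \<le> (\<Sum>i\<in>S. softmax S u i * (\<beta> * wnorm (matrix_inv \<Sigma>) (\<phi> s a i - fbar)))"
      by (intro sum_mono mult_left_mono softmax_nonneg)
    moreover have "(\<beta> * sqrt ?M)\<^sup>2 = \<beta>\<^sup>2 * ?M"
    proof -
      obtain i where "i \<in> S" using ne by (auto simp: S_def)
      then have "0 \<le> ?M" using M order_trans zero_le_power2 by blast
      then show ?thesis by (simp add: power_mult_distrib)
    qed
    ultimately show ?thesis by simp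
  qed
  also have "(\<Sum>i\<in>S. softmax S u i * (\<beta> * wnorm (matrix_inv \<Sigma>) (\<phi> s a i - fbar))) = \<beta> * ?first"
    using p(1) by (simp add: S_def fbar_def sum_distrib_left mult.left_commute)
  also have "(\<Sum>i\<in>S. \<bar>softmax S v i - softmax S u i\<bar>) = ?lhs"
    using p by (simp add: S_def)
  finally show ?thesis .
qed

lemma mnl_prob_mem_conf_set:
  fixes \<phi> :: "'s::finite \<Rightarrow> 'a \<Rightarrow> 's \<Rightarrow> real^'d"
  assumes "\<And>s a. Sr s a \<noteq> {}" and "pos_def_mat \<Sigma>" and "wnorm \<Sigma> (\<theta>h - \<theta>s) \<le> \<beta>"
  shows "mnl_prob \<phi> Sr \<theta>s \<in> conf_set \<phi> Sr \<beta> \<Sigma> \<theta>h"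
proof -
  have "stochastic_kernel Sr (mnl_prob \<phi> Sr \<theta>s)" using assms(1) by (rule mnl_prob_stochastic)
  moreover note l1 = mnl_prob_l1_dist_le[where Sr = Sr, OF assms(1) assms(2,3)]
  ultimately show ?thesis
    unfolding conf_set_def stochastic_kernel_def
    by (intro CollectI conjI allI) (simp_all add: mnl_prob_le_one)
qed

section \<open>Optimism of DEVI\<close>

lemma Max_range_mono:
  fixes f g :: "'a::finite \<Rightarrow> 'b::linorder"
  assumes "\<And>x. f x \<le> g x"
  shows "Max (range f) \<le> Max (range g)"
proof -
  have "Max (range f) \<in> range f" by (rule Max_in) simp_all
  then obtain x where "Max (range f) = f x" by blast
  also have "f x \<le> g x" by (rule assms)
  also have "g x \<le> Max (range g)" by (rule Max_ge) simp_all
  finally show ?thesis .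
qed

lemma stochastic_kernel_avg_mono:
  assumes "stochastic_kernel Sr p" "\<And>s'. f s' \<le> g s'"
  shows "(\<Sum>s'\<in>Sr s a. p s a s' * f s') \<le> (\<Sum>s'\<in>Sr s a. p s a s' * g s')"
  using assms by (intro sum_mono mult_left_mono) (simp_all add: stochastic_kernel_def)

lemma stochastic_kernel_avg_le:
  assumes p: "stochastic_kernel Sr p" and "\<And>s'. f s' \<le> c"
  shows "(\<Sum>s'\<in>Sr s a. p s a s' * f s') \<le> c"
proof -
  have "(\<Sum>s'\<in>Sr s a. p s a s' * f s') \<le> (\<Sum>s'\<in>Sr s a. p s a s' * c)"
    using assms by (rule stochastic_kernel_avg_mono)
  also have "\<dots> = c" using p by (simp add: stochastic_kernel_def flip: sum_distrib_right)
  finally show ?thesis .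
qed

lemma bellman_value_le:
  fixes r :: "'s::finite \<Rightarrow> 'a::finite \<Rightarrow> real"
  assumes p: "stochastic_kernel Sr p" and r: "\<And>s a. r s a \<le> 1" and \<gamma>: "0 \<le> \<gamma>" "\<gamma> < 1"
    and Q: "\<And>s a. Q s a = r s a + \<gamma> * (\<Sum>s'\<in>Sr s a. p s a s' * V s')"
    and V: "\<And>s. V s = Max (range (Q s))"
  shows "V s \<le> 1 / (1 - \<gamma>)"
proof -
  define Vmax where "Vmax = Max (range V)"
  have "Vmax \<in> range V" unfolding Vmax_def by (rule Max_in) simp_all
  then obtain s0 where "V s0 = Vmax" by blast
  have "Max (range (Q s0)) \<in> range (Q s0)" by (rule Max_in) simp_all
  then obtain a0 where "V s0 = Q s0 a0" unfolding V[of s0] by (metis rangeE)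
  have le_Vmax: "V s' \<le> Vmax" for s' by (simp add: Vmax_def)
  have "Vmax = r s0 a0 + \<gamma> * (\<Sum>s'\<in>Sr s0 a0. p s0 a0 s' * V s')"
    using \<open>V s0 = Vmax\<close> \<open>V s0 = Q s0 a0\<close> Q[of s0 a0] by simp
  also have "\<dots> \<le> 1 + \<gamma> * Vmax"
    using r \<gamma>(1) stochastic_kernel_avg_le[OF p le_Vmax] by (intro add_mono mult_left_mono)
  finally have "Vmax \<le> 1 + \<gamma> * Vmax" .
  then have "Vmax \<le> 1 / (1 - \<gamma>)" using \<gamma>(2) by (simp add: le_divide_eq algebra_simps)
  then show ?thesis using le_Vmax[of s] by linarith
qed

lemma devi_Q_Suc_eq:
  "devi_Q r Sr \<gamma> P (Suc n) s a
    = r s a + \<gamma> * Sup ((\<lambda>p. \<Sum>s'\<in>Sr s a. p s a s' * devi_V r Sr \<gamma> P n s') ` P)"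
  by (simp add: devi_V_def)

lemma devi_Q_le:
  fixes r :: "'s::finite \<Rightarrow> 'a::finite \<Rightarrow> real"
  assumes P: "\<And>p. p \<in> P \<Longrightarrow> stochastic_kernel Sr p" "P \<noteq> {}"
    and r: "\<And>s a. r s a \<le> 1" and \<gamma>: "0 \<le> \<gamma>" "\<gamma> < 1"
  shows "devi_Q r Sr \<gamma> P n s a \<le> 1 / (1 - \<gamma>)"
proof (induction n arbitrary: s a)
  case 0
  show ?case by simp
next
  case (Suc n)
  have "devi_V r Sr \<gamma> P n s' \<le> 1 / (1 - \<gamma>)" for s'
    unfolding devi_V_def using Suc.IH by (subst Max_le_iff) auto
  then have "Sup ((\<lambda>p. \<Sum>s'\<in>Sr s a. p s a s' * devi_V r Sr \<gamma> P n s') ` P) \<le> 1 / (1 - \<gamma>)"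
    using P by (intro cSUP_least stochastic_kernel_avg_le) auto
  then have "devi_Q r Sr \<gamma> P (Suc n) s a \<le> 1 + \<gamma> * (1 / (1 - \<gamma>))"
    unfolding devi_Q_Suc_eq using r[of s a] \<gamma>(1) by (intro add_mono mult_left_mono)
  also have "\<dots> = 1 / (1 - \<gamma>)" using \<gamma>(2) by (simp add: field_simps)
  finally show ?case .
qed

lemma devi_V_le:
  fixes r :: "'s::finite \<Rightarrow> 'a::finite \<Rightarrow> real"
  assumes "\<And>p. p \<in> P \<Longrightarrow> stochastic_kernel Sr p" "P \<noteq> {}"
    and "\<And>s a. r s a \<le> 1" "0 \<le> \<gamma>" "\<gamma> < 1"
  shows "devi_V r Sr \<gamma> P n s \<le> 1 / (1 - \<gamma>)"
  unfolding devi_V_def using devi_Q_le[OF assms] by (subst Max_le_iff) auto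

lemma devi_Q_ge_optimal:
  fixes r :: "'s::finite \<Rightarrow> 'a::finite \<Rightarrow> real"
  assumes P: "\<And>p. p \<in> P \<Longrightarrow> stochastic_kernel Sr p" and p: "p \<in> P"
    and r: "\<And>s a. r s a \<le> 1" and \<gamma>: "0 \<le> \<gamma>" "\<gamma> < 1"
    and Q: "\<And>s a. Q s a = r s a + \<gamma> * (\<Sum>s'\<in>Sr s a. p s a s' * V s')"
    and V: "\<And>s. V s = Max (range (Q s))"
  shows "Q s a \<le> devi_Q r Sr \<gamma> P n s a"
proof (induction n arbitrary: s a)
  case 0
  have "Q s a \<le> V s" unfolding V by (rule Max_ge) simp_all
  also have "V s \<le> 1 / (1 - \<gamma>)" by (rule bellman_value_le[OF P[OF p] r \<gamma> Q V])
  finally show ?case by simp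
next
  case (Suc n)
  define avg where "avg = (\<lambda>p'. \<Sum>s'\<in>Sr s a. p' s a s' * devi_V r Sr \<gamma> P n s')"
  have "V s' \<le> devi_V r Sr \<gamma> P n s'" for s'
    unfolding V devi_V_def using Suc.IH by (rule Max_range_mono)
  then have "(\<Sum>s'\<in>Sr s a. p s a s' * V s') \<le> avg p"
    unfolding avg_def using P[OF p] by (intro stochastic_kernel_avg_mono)
  also have "avg p \<le> Sup (avg ` P)"
  proof (rule cSUP_upper[OF p])
    have "devi_V r Sr \<gamma> P n s' \<le> 1 / (1 - \<gamma>)" for s'
      using devi_V_le[of P Sr r \<gamma> n s'] P p r \<gamma> by auto
    then have "avg p' \<le> 1 / (1 - \<gamma>)" if "p' \<in> P" for p'
      unfolding avg_def using P[OF that] by (intro stochastic_kernel_avg_le)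
    then show "bdd_above (avg ` P)" by (rule bdd_aboveI2)
  qed
  finally have "(\<Sum>s'\<in>Sr s a. p s a s' * V s') \<le> Sup (avg ` P)" .
  then show ?case
    unfolding Q devi_Q_Suc_eq avg_def using \<gamma>(1) by (intro add_left_mono mult_left_mono)
qed

lemma devi_V_ge_optimal:
  fixes r :: "'s::finite \<Rightarrow> 'a::finite \<Rightarrow> real"
  assumes "\<And>p. p \<in> P \<Longrightarrow> stochastic_kernel Sr p" "p \<in> P"
    and "\<And>s a. r s a \<le> 1" "0 \<le> \<gamma>" "\<gamma> < 1"
    and "\<And>s a. Q s a = r s a + \<gamma> * (\<Sum>s'\<in>Sr s a. p s a s' * V s')"
    and V: "\<And>s. V s = Max (range (Q s))"
  shows "V s \<le> devi_V r Sr \<gamma> P n s"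
  unfolding V devi_V_def using devi_Q_ge_optimal[OF assms] by (rule Max_range_mono)

theorem lemma6:
  fixes r :: "'s::finite \<Rightarrow> 'a::finite \<Rightarrow> real"
    and \<phi> :: "'s \<Rightarrow> 'a \<Rightarrow> 's \<Rightarrow> real^'d::finite"
    and Sr :: "'s \<Rightarrow> 'a \<Rightarrow> 's set"
    and \<gamma> L\<theta> :: real
    and \<theta>star :: "real^'d"
    and \<theta>h :: "nat \<Rightarrow> real^'d"
    and \<Sigma> :: "nat \<Rightarrow> real^'d^'d"
    and \<beta> :: "nat \<Rightarrow> real"
    and T tk N :: nat
    and Vstar :: "'s \<Rightarrow> real" and Qstar :: "'s \<Rightarrow> 'a \<Rightarrow> real"
  assumes r_range: "\<And>s a. 0 \<le> r s a \<and> r s a \<le> 1"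
    and gamma: "0 \<le> \<gamma>" "\<gamma> < 1"
    and Sr_ne: "\<And>s a. Sr s a \<noteq> {}"
    and Sigma_pd: "\<And>t. pos_def_mat (\<Sigma> t)"
    and theta_bound: "norm \<theta>star \<le> L\<theta>"
    and conf: "\<And>t. t \<in> {1..T} \<Longrightarrow> wnorm (\<Sigma> t) (\<theta>h t - \<theta>star) \<le> \<beta> t"
    and tk: "tk \<in> {1..T}"
    and Qstar_eq: "\<And>s a. Qstar s a = r s a + \<gamma> * (\<Sum>s'\<in>Sr s a. mnl_prob \<phi> Sr \<theta>star s a s' * Vstar s')"
    and Vstar_eq: "\<And>s. Vstar s = Max (range (Qstar s))"
  shows "\<forall>s a.
           1 / (1 - \<gamma>) \<ge> devi_V r Sr \<gamma> (conf_set \<phi> Sr (\<beta> tk) (\<Sigma> tk) (\<theta>h tk)) N s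
         \<and> devi_V r Sr \<gamma> (conf_set \<phi> Sr (\<beta> tk) (\<Sigma> tk) (\<theta>h tk)) N s \<ge> Vstar s
         \<and> 1 / (1 - \<gamma>) \<ge> devi_Q r Sr \<gamma> (conf_set \<phi> Sr (\<beta> tk) (\<Sigma> tk) (\<theta>h tk)) N s a
         \<and> devi_Q r Sr \<gamma> (conf_set \<phi> Sr (\<beta> tk) (\<Sigma> tk) (\<theta>h tk)) N s a \<ge> Qstar s a"
proof -
  define P where "P = conf_set \<phi> Sr (\<beta> tk) (\<Sigma> tk) (\<theta>h tk)"
  have true_kernel: "mnl_prob \<phi> Sr \<theta>star \<in> P"
    unfolding P_def by (rule mnl_prob_mem_conf_set[OF Sr_ne Sigma_pd conf[OF tk]])
  have stochastic: "\<And>p. p \<in> P \<Longrightarrow> stochastic_kernel Sr p"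
    unfolding P_def by (rule conf_set_stochastic)
  have r: "\<And>s a. r s a \<le> 1" using r_range by blast
  have nonempty: "P \<noteq> {}" using true_kernel by blast
  show ?thesis
    using devi_V_le[OF stochastic nonempty r gamma] devi_Q_le[OF stochastic nonempty r gamma]
      devi_V_ge_optimal[OF stochastic true_kernel r gamma Qstar_eq Vstar_eq]
      devi_Q_ge_optimal[OF stochastic true_kernel r gamma Qstar_eq Vstar_eq]
    by (simp add: P_def)
qed

end
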